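(* Let $X$ be a $T_0$ space. If $GSI_2$-convergence in $X$ is topological, then $X$ is $QI_2$-continuous.
   Context: For a $T_0$ space $X$, the specialization order is $x\le y$ iff $x\in \mathrm{cl}\{y\}$; $\uparrow A=\{x: a\le x\text{ for some } a\in A\}$, $\uparrow x=\uparrow\{x\}$; $A^\uparrow$, $A^\downarrow$ are the sets of upper and lower bounds of $A$, and $A^\delta=(A^\uparrow)^\downarrow$. A nonempty subset $A$ of a space is irreducible if whenever $A\subseteq F_1\cup F_2$ with $F_1,F_2$ closed, $A\subseteq F_1$ or $A\subseteq F_2$. $X^{(<\omega)}$ is the set of nonempty finite subsets of $X$. $P_S(X)$ is the set of nonempty compact saturated (upper) subsets of $X$ with the upper Vietoris topology, basis $\{\square U: U\text{ open}\}$, $\square U=\{Q: Q\subseteq U\}$. A net is eventually in $U$ if from some index on all its terms lie in $U$; it converges to $x$ in a topology if it is eventually in every open set containing $x$. A net $(x_i)_{i\in I}$ $GSI_2$-converges to $x$ if there exists $\mathcal F\subseteq X^{(<\omega)}$ with $\{\uparrow G: G\in\mathcal F\}$ irreducible in $P_S(X)$ such that (i) for every open $U$, if $\uparrow G\subseteq U$ for some $G\in\mathcal F$ then $x_i\in U$ eventually, and (ii) $\bigcap_{G\in\mathcal F}\uparrow G\subseteq\uparrow x$. Let $\mathcal{O}(\mathcal{GSI}_2(X))$ be the topology of all $U\subseteq X$ such that every net $GSI_2$-converging to a point of $U$ is eventually in $U$. $GSI_2$-convergence in $X$ is topological if for every net and point, the net $GSI_2$-converges to the point iff it converges to it in the topology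 $\mathcal{O}(\mathcal{GSI}_2(X))$. For $A\subseteq X$, $x\in X$, $A\ll_{I_2}x$ means: for every irreducible $D\subseteq X$ with $x\in D^\delta$, $A\cap\mathrm{cl}D\ne\emptyset$. For $x\in X$, $w(x)=\{\uparrow F: F\in X^{(<\omega)}, F\ll_{I_2}x\}$. $X$ is $QI_2$-continuous if for every $x\in X$, $w(x)$ is an irreducible subset of $P_S(X)$ and $\uparrow x=\bigcap w(x)$. *)

theory Defs
  imports "HOL-Analysis.Analysis"
begin

definition T0_space :: "'a topology \<Rightarrow> bool" where
  "T0_space T \<longleftrightarrow> (\<forall>x\<in>topspace T. \<forall>y\<in>topspace T. x \<noteq> y \<longrightarrow>
      (\<exists>U. openin T U \<and> \<not> (x \<in> U \<longleftrightarrow> y \<in> U)))"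

definition spec_le :: "'a topology \<Rightarrow> 'a \<Rightarrow> 'a \<Rightarrow> bool" where
  "spec_le T x y \<longleftrightarrow> x \<in> topspace T \<and> y \<in> topspace T \<and> x \<in> T closure_of {y}"

definition up_set :: "'a topology \<Rightarrow> 'a set \<Rightarrow> 'a set" where
  "up_set T A = {x \<in> topspace T. \<exists>a\<in>A. spec_le T a x}"

definition upper_bounds :: "'a topology \<Rightarrow> 'a set \<Rightarrow> 'a set" where
  "upper_bounds T A = {y \<in> topspace T. \<forall>a\<in>A. spec_le T a y}"

definition lower_bounds :: "'a topology \<Rightarrow> 'a set \<Rightarrow> 'a set" where
  "lower_bounds T A = {y \<in> topspace T. \<forall>a\<in>A. spec_le T y a}"

definition delta_cut :: "'a topology \<Rightarrow> 'a set \<Rightarrow> 'a set" where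
  "delta_cut T A = lower_bounds T (upper_bounds T A)"

definition irreducible_in :: "'b topology \<Rightarrow> 'b set \<Rightarrow> bool" where
  "irreducible_in T A \<longleftrightarrow> A \<noteq> {} \<and> A \<subseteq> topspace T \<and>
     (\<forall>F1 F2. closedin T F1 \<and> closedin T F2 \<and> A \<subseteq> F1 \<union> F2 \<longrightarrow> A \<subseteq> F1 \<or> A \<subseteq> F2)"

definition fin_subsets :: "'a topology \<Rightarrow> 'a set set" where
  "fin_subsets T = {F. F \<subseteq> topspace T \<and> finite F \<and> F \<noteq> {}}"

definition PS :: "'a topology \<Rightarrow> 'a set set" where
  "PS T = {Q. Q \<subseteq> topspace T \<and> Q \<noteq> {} \<and> compactin T Q \<and> up_set T Q = Q}"

definition box :: "'a topology \<Rightarrow> 'a set \<Rightarrow> 'a set set" where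
  "box T U = {Q \<in> PS T. Q \<subseteq> U}"

definition upper_vietoris :: "'a topology \<Rightarrow> 'a set topology" where
  "upper_vietoris T = topology_generated_by {box T U | U. openin T U}"

text \<open>Nets in X are represented by filters on X (the eventuality filter of the net):
  a net is eventually in U iff the set U is eventually in the filter.\<close>
definition is_net :: "'a topology \<Rightarrow> 'a filter \<Rightarrow> bool" where
  "is_net T N \<longleftrightarrow> N \<noteq> bot \<and> eventually (\<lambda>y. y \<in> topspace T) N"

definition ev_in :: "'a filter \<Rightarrow> 'a set \<Rightarrow> bool" where
  "ev_in N U \<longleftrightarrow> eventually (\<lambda>y. y \<in> U) N"

definition GSI2_conv :: "'a topology \<Rightarrow> 'a filter \<Rightarrow> 'a \<Rightarrow> bool" where
  "GSI2_conv T N x \<longleftrightarrow> (\<exists>\<F>. \<F> \<subseteq> fin_subsets T \<and>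
      irreducible_in (upper_vietoris T) ((up_set T) ` \<F>) \<and>
      (\<forall>U. openin T U \<longrightarrow> (\<exists>G\<in>\<F>. up_set T G \<subseteq> U) \<longrightarrow> ev_in N U) \<and>
      (\<Inter>G\<in>\<F>. up_set T G) \<subseteq> up_set T {x})"

definition GSI2_opens :: "'a topology \<Rightarrow> 'a set set" where
  "GSI2_opens T = {U. U \<subseteq> topspace T \<and>
      (\<forall>N x. is_net T N \<longrightarrow> x \<in> U \<longrightarrow> GSI2_conv T N x \<longrightarrow> ev_in N U)}"

definition GSI2_topological :: "'a topology \<Rightarrow> bool" where
  "GSI2_topological T \<longleftrightarrow> (\<forall>N. \<forall>x\<in>topspace T. is_net T N \<longrightarrow>
      (GSI2_conv T N x \<longleftrightarrow> (\<forall>U\<in>GSI2_opens T. x \<in> U \<longrightarrow> ev_in N U)))"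

definition way_below_I2 :: "'a topology \<Rightarrow> 'a set \<Rightarrow> 'a \<Rightarrow> bool" where
  "way_below_I2 T A x \<longleftrightarrow> (\<forall>D. irreducible_in T D \<longrightarrow> x \<in> delta_cut T D \<longrightarrow>
      A \<inter> (T closure_of D) \<noteq> {})"

definition w_set :: "'a topology \<Rightarrow> 'a \<Rightarrow> 'a set set" where
  "w_set T x = {up_set T F | F. F \<in> fin_subsets T \<and> way_below_I2 T F x}"

definition QI2_continuous :: "'a topology \<Rightarrow> bool" where
  "QI2_continuous T \<longleftrightarrow> (\<forall>x\<in>topspace T.
      irreducible_in (upper_vietoris T) (w_set T x) \<and> up_set T {x} = \<Inter>(w_set T x))"

end

(*
  Fix x and let N be its neighbourhood filter in the GSI2 topology.  As GSI2-convergence is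
  topological, N GSI2-converges to x, witnessed by a family F of finite sets with {\<up>G | G \<in> F}
  irreducible in P_S(X).  An irreducible set D with x \<in> D^\<delta>, viewed as a net, GSI2-converges
  to x, so every GSI2-open neighbourhood of x meets D; hence every G \<in> F is I2-way below x,
  which gives \<up>x = \<Inter>w(x).  Conversely, by a topological Rudin lemma, whenever H is I2-way below
  x and H \<subseteq> U with U open, some G \<in> F lies in U.  So w(x) lies between {\<up>G | G \<in> F} and its
  closure in P_S(X), and is therefore irreducible.
*)

theory Submission
  imports Defs
begin

lemma spec_le_refl: "x \<in> topspace T \<Longrightarrow> spec_le T x x"
  unfolding spec_le_def using closure_of_subset[of "{x}" T] by auto

lemma spec_le_trans: "spec_le T a b \<Longrightarrow> spec_le T b c \<Longrightarrow> spec_le T a c"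
  unfolding spec_le_def
  by (meson closedin_closure_of closure_of_minimal insert_subset subsetD empty_subsetI)

lemma spec_le_closedin: "closedin T C \<Longrightarrow> spec_le T a y \<Longrightarrow> y \<in> C \<Longrightarrow> a \<in> C"
  unfolding spec_le_def by (meson closure_of_minimal empty_subsetI insert_subset subsetD)

lemma spec_le_openin:
  assumes "openin T U" "spec_le T a y" "a \<in> U"
  shows "y \<in> U"
proof (rule ccontr)
  assume "y \<notin> U"
  then have "y \<in> topspace T - U" using assms(2) by (auto simp: spec_le_def)
  then have "a \<in> topspace T - U" using spec_le_closedin[OF _ assms(2)] assms(1) by blast
  with assms(3) show False by blast
qed

lemma subset_up_set: "G \<subseteq> topspace T \<Longrightarrow> G \<subseteq> up_set T G"
  unfolding up_set_def using spec_le_refl by fastforce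

lemma up_set_subset_topspace: "up_set T G \<subseteq> topspace T"
  by (auto simp: up_set_def)

lemma up_set_subset_openin: "openin T U \<Longrightarrow> G \<subseteq> U \<Longrightarrow> up_set T G \<subseteq> U"
  unfolding up_set_def using spec_le_openin by fastforce

lemma up_set_singleton_subset_openin_iff:
  "openin T U \<Longrightarrow> d \<in> topspace T \<Longrightarrow> up_set T {d} \<subseteq> U \<longleftrightarrow> d \<in> U"
  using subset_up_set[of "{d}" T] up_set_subset_openin[of T U "{d}"] by blast

lemma up_set_disjoint_closedin: "closedin T C \<Longrightarrow> G \<inter> C = {} \<Longrightarrow> up_set T G \<inter> C = {}"
  unfolding up_set_def using spec_le_closedin by fastforce

lemma up_set_idem: "up_set T (up_set T G) = up_set T G"
proof
  show "up_set T (up_set T G) \<subseteq> up_set T G"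
  proof
    fix y assume "y \<in> up_set T (up_set T G)"
    then obtain z g where "g \<in> G" "spec_le T g z" "spec_le T z y" "y \<in> topspace T"
      unfolding up_set_def by blast
    then show "y \<in> up_set T G"
      unfolding up_set_def using spec_le_trans[of T g z y] by blast
  qed
  show "up_set T G \<subseteq> up_set T (up_set T G)"
    by (rule subset_up_set[OF up_set_subset_topspace])
qed

lemma compactin_up_set:
  assumes K: "compactin T K"
  shows "compactin T (up_set T K)"
  unfolding compactin_def
proof (intro conjI allI impI up_set_subset_topspace)
  fix \<U> assume \<U>: "Ball \<U> (openin T) \<and> up_set T K \<subseteq> \<Union>\<U>"
  have "K \<subseteq> \<Union>\<U>"
    using \<U> subset_up_set[OF compactin_subset_topspace[OF K]] by blast
  then obtain \<F> where \<F>: "finite \<F>" "\<F> \<subseteq> \<U>" "K \<subseteq> \<Union>\<F>"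
    using K \<U> unfolding compactin_def by meson
  have "openin T (\<Union>\<F>)" using \<F>(2) \<U> by blast
  then have "up_set T K \<subseteq> \<Union>\<F>" using \<F>(3) by (rule up_set_subset_openin)
  then show "\<exists>\<F>. finite \<F> \<and> \<F> \<subseteq> \<U> \<and> up_set T K \<subseteq> \<Union>\<F>"
    using \<F>(1,2) by blast
qed

lemma up_set_in_PS:
  assumes "G \<in> fin_subsets T"
  shows "up_set T G \<in> PS T"
proof -
  have G: "finite G" "G \<subseteq> topspace T" "G \<noteq> {}" using assms by (auto simp: fin_subsets_def)
  have "compactin T (up_set T G)"
    using G(1,2) by (intro compactin_up_set finite_imp_compactin)
  moreover have "up_set T G \<noteq> {}" using subset_up_set[OF G(2)] G(3) by blast
  ultimately show ?thesis by (simp add: PS_def up_set_idem up_set_subset_topspace)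
qed

lemma topspace_upper_vietoris: "topspace (upper_vietoris T) = PS T"
proof -
  have "box T (topspace T) = PS T" by (auto simp: box_def PS_def)
  then show ?thesis unfolding upper_vietoris_def box_def by auto
qed

lemma openin_upper_vietoris_box: "openin T U \<Longrightarrow> openin (upper_vietoris T) (box T U)"
  unfolding upper_vietoris_def by (rule topology_generated_by_Basis) blast

lemma openin_upper_vietoris_imp_box:
  assumes "openin (upper_vietoris T) \<O>" "Q \<in> \<O>"
  obtains U where "openin T U" "Q \<in> box T U" "box T U \<subseteq> \<O>"
proof -
  have "generate_topology_on {box T U | U. openin T U} \<O>"
    using assms(1) unfolding upper_vietoris_def by (rule openin_topology_generated_by)
  then have "\<exists>U. openin T U \<and> Q \<in> box T U \<and> box T U \<subseteq> \<O>"
    using assms(2)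
  proof (induction arbitrary: Q)
    case (Int a b)
    then obtain U1 U2 where "openin T U1" "Q \<in> box T U1" "box T U1 \<subseteq> a"
       "openin T U2" "Q \<in> box T U2" "box T U2 \<subseteq> b" by (meson IntD1 IntD2)
    then show ?case by (intro exI[of _ "U1 \<inter> U2"]) (auto simp: box_def)
  next
    case (UN K)
    then obtain k where "k \<in> K" "Q \<in> k" by blast
    with UN.IH[of k Q] show ?case by blast
  qed auto
  then show thesis using that by blast
qed

lemma up_set_singleton_in_PS: "d \<in> topspace T \<Longrightarrow> up_set T {d} \<in> PS T"
  by (rule up_set_in_PS) (simp add: fin_subsets_def)

lemma continuous_map_up_set_singleton:
  "continuous_map T (upper_vietoris T) (\<lambda>d. up_set T {d})"
  unfolding continuous_map_def topspace_upper_vietoris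
proof (intro conjI allI impI)
  show "(\<lambda>d. up_set T {d}) \<in> topspace T \<rightarrow> PS T"
    by (simp add: up_set_singleton_in_PS)
  fix \<O> assume \<O>: "openin (upper_vietoris T) \<O>"
  let ?pre = "{d \<in> topspace T. up_set T {d} \<in> \<O>}"
  have "\<exists>U. openin T U \<and> d \<in> U \<and> U \<subseteq> ?pre" if d: "d \<in> ?pre" for d
  proof -
    obtain U where U: "openin T U" "up_set T {d} \<in> box T U" "box T U \<subseteq> \<O>"
      using openin_upper_vietoris_imp_box[OF \<O>] d by blast
    have "d \<in> U"
      using U(2) d up_set_singleton_subset_openin_iff[OF U(1)] by (simp add: box_def)
    moreover have "U \<subseteq> ?pre"
    proof
      fix y assume y: "y \<in> U"
      then have yT: "y \<in> topspace T" using openin_subset[OF U(1)] by blast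
      then have "up_set T {y} \<in> box T U"
        using y up_set_singleton_in_PS up_set_singleton_subset_openin_iff[OF U(1)]
        by (simp add: box_def)
      then show "y \<in> ?pre" using U(3) yT by blast
    qed
    ultimately show ?thesis using U(1) by blast
  qed
  then show "openin T ?pre"
    using openin_subopen by blast
qed

lemma irreducible_in_continuous_map_image:
  assumes f: "continuous_map X Y f" and A: "irreducible_in X A"
  shows "irreducible_in Y (f ` A)"
  unfolding irreducible_in_def
proof (intro conjI allI impI)
  show "f ` A \<noteq> {}" "f ` A \<subseteq> topspace Y"
    using A continuous_map_image_subset_topspace[OF f] by (auto simp: irreducible_in_def)
  fix C1 C2 assume C: "closedin Y C1 \<and> closedin Y C2 \<and> f ` A \<subseteq> C1 \<union> C2"
  let ?pre = "\<lambda>C. {x \<in> topspace X. f x \<in> C}"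
  have "A \<subseteq> ?pre C1 \<union> ?pre C2" using A C by (auto simp: irreducible_in_def)
  then have "A \<subseteq> ?pre C1 \<or> A \<subseteq> ?pre C2"
    using A C closedin_continuous_map_preimage[OF f] by (simp add: irreducible_in_def)
  then show "f ` A \<subseteq> C1 \<or> f ` A \<subseteq> C2" by blast
qed

lemma irreducible_in_closure_between:
  assumes A: "irreducible_in X A" and "A \<subseteq> B" "B \<subseteq> X closure_of A"
  shows "irreducible_in X B"
  unfolding irreducible_in_def
proof (intro conjI allI impI)
  show "B \<noteq> {}" using A assms(2) unfolding irreducible_in_def by blast
  show "B \<subseteq> topspace X" using assms(3) closure_of_subset_topspace by (rule order.trans)
  fix C1 C2 assume C: "closedin X C1 \<and> closedin X C2 \<and> B \<subseteq> C1 \<union> C2"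
  then have "A \<subseteq> C1 \<or> A \<subseteq> C2" using A assms(2) unfolding irreducible_in_def by blast
  then show "B \<subseteq> C1 \<or> B \<subseteq> C2"
    using C assms(3) closure_of_minimal by (metis order_trans)
qed

lemma mem_delta_cut_iff:
  "x \<in> delta_cut T A \<longleftrightarrow> x \<in> topspace T \<and> upper_bounds T A \<subseteq> up_set T {x}"
  unfolding delta_cut_def lower_bounds_def upper_bounds_def up_set_def spec_le_def by blast

lemma upper_bounds_subset_Inter_up_set:
  "(\<And>G. G \<in> \<F> \<Longrightarrow> G \<inter> A \<noteq> {}) \<Longrightarrow> upper_bounds T A \<subseteq> (\<Inter>G\<in>\<F>. up_set T G)"
  unfolding upper_bounds_def up_set_def by blast

lemma irreducible_up_family_directed:
  assumes irr: "irreducible_in (upper_vietoris T) (up_set T ` \<F>)"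
    and U1: "openin T U1" "G1 \<in> \<F>" "up_set T G1 \<subseteq> U1"
    and U2: "openin T U2" "G2 \<in> \<F>" "up_set T G2 \<subseteq> U2"
  shows "\<exists>G\<in>\<F>. up_set T G \<subseteq> U1 \<inter> U2"
proof (rule ccontr)
  assume none: "\<not> ?thesis"
  let ?C = "\<lambda>U. PS T - box T U"
  have closed: "closedin (upper_vietoris T) (?C U)" if "openin T U" for U
    using closedin_diff[OF closedin_topspace openin_upper_vietoris_box[OF that]]
    by (simp add: topspace_upper_vietoris)
  have family: "up_set T ` \<F> \<subseteq> PS T"
    using irr by (simp add: irreducible_in_def topspace_upper_vietoris)
  then have "up_set T ` \<F> \<subseteq> ?C U1 \<union> ?C U2"
    using none by (auto simp: box_def)
  then have "up_set T ` \<F> \<subseteq> ?C U1 \<or> up_set T ` \<F> \<subseteq> ?C U2"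
    using irr closed U1(1) U2(1) unfolding irreducible_in_def by blast
  moreover have "up_set T G1 \<notin> ?C U1" "up_set T G2 \<notin> ?C U2"
    using U1 U2 family by (auto simp: box_def)
  ultimately show False using U1(2) U2(2) by blast
qed

definition closed_transversal :: "'a topology \<Rightarrow> 'a set set \<Rightarrow> 'a set \<Rightarrow> bool" where
  "closed_transversal T \<F> A \<longleftrightarrow> closedin T A \<and> (\<forall>G\<in>\<F>. G \<inter> A \<noteq> {})"

definition minimal_closed_transversal :: "'a topology \<Rightarrow> 'a set set \<Rightarrow> 'a set \<Rightarrow> bool" where
  "minimal_closed_transversal T \<F> A \<longleftrightarrow>
    closed_transversal T \<F> A \<and> (\<forall>B. closed_transversal T \<F> B \<and> B \<subseteq> A \<longrightarrow> B = A)"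

text \<open>A topological Rudin lemma; existence comes from Zorn's lemma applied to the
  complementary open sets.\<close>

lemma minimal_closed_transversal_exists:
  assumes fin: "\<F> \<subseteq> fin_subsets T" and C: "closed_transversal T \<F> C"
  obtains A where "minimal_closed_transversal T \<F> A" "A \<subseteq> C"
proof -
  have G: "finite G" "G \<subseteq> topspace T" if "G \<in> \<F>" for G
    using fin that by (auto simp: fin_subsets_def)
  define \<A> where "\<A> = {W. openin T W \<and> topspace T - C \<subseteq> W \<and> (\<forall>G\<in>\<F>. \<not> G \<subseteq> W)}"
  have "topspace T - C \<in> \<A>"
    using C G unfolding \<A>_def closed_transversal_def by blast
  then have "\<exists>W\<in>\<A>. \<forall>W'\<in>\<A>. W \<subseteq> W' \<longrightarrow> W' = W"
  proof (intro subset_Zorn_nonempty)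
    fix \<C> assume \<C>: "\<C> \<noteq> {}" "subset.chain \<A> \<C>"
    then have "\<C> \<subseteq> \<A>" by (simp add: subset.chain_def)
    moreover have "\<not> G \<subseteq> \<Union>\<C>" if GF: "G \<in> \<F>" for G
    proof
      assume "G \<subseteq> \<Union>\<C>"
      then obtain W where "W \<in> \<C>" "G \<subseteq> W"
        using finite_subset_Union_chain G(1)[OF GF] \<C> by metis
      then show False using \<open>\<C> \<subseteq> \<A>\<close> GF unfolding \<A>_def by blast
    qed
    ultimately show "\<Union>\<C> \<in> \<A>" using \<C>(1) unfolding \<A>_def by blast
  qed blast
  then obtain W where W: "W \<in> \<A>" and max: "\<And>W'. W' \<in> \<A> \<Longrightarrow> W \<subseteq> W' \<Longrightarrow> W' = W"
    by blast
  have "closedin T (topspace T - W)" using W unfolding \<A>_def by blast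
  moreover have "G \<inter> (topspace T - W) \<noteq> {}" if "G \<in> \<F>" for G
    using W G(2)[OF that] that unfolding \<A>_def by blast
  ultimately have transversal: "closed_transversal T \<F> (topspace T - W)"
    unfolding closed_transversal_def by blast
  have minimal: "B = topspace T - W"
    if B: "closed_transversal T \<F> B" "B \<subseteq> topspace T - W" for B
  proof -
    have "topspace T - B \<in> \<A>"
      using W B unfolding \<A>_def closed_transversal_def by blast
    moreover have "W \<subseteq> topspace T - B"
      using W B(2) openin_subset unfolding \<A>_def by blast
    ultimately have "topspace T - B = W" using max by blast
    then show ?thesis using B(1) closedin_subset unfolding closed_transversal_def by blast
  qed
  have "minimal_closed_transversal T \<F> (topspace T - W)"
    unfolding minimal_closed_transversal_def using transversal minimal by blast
  moreover have "topspace T - W \<subseteq> C" using W unfolding \<A>_def by blast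
  ultimately show thesis by (rule that)
qed

lemma irreducible_minimal_closed_transversal:
  assumes irr: "irreducible_in (upper_vietoris T) (up_set T ` \<F>)"
    and fin: "\<F> \<subseteq> fin_subsets T"
    and "minimal_closed_transversal T \<F> A"
  shows "irreducible_in T A"
  unfolding irreducible_in_def
proof (intro conjI allI impI)
  have A: "closedin T A" "\<And>G. G \<in> \<F> \<Longrightarrow> G \<inter> A \<noteq> {}"
    and min: "\<And>B. closed_transversal T \<F> B \<Longrightarrow> B \<subseteq> A \<Longrightarrow> B = A"
    using assms(3) unfolding minimal_closed_transversal_def closed_transversal_def by blast+
  show "A \<noteq> {}" using A(2) irr by (auto simp: irreducible_in_def)
  show "A \<subseteq> topspace T" using closedin_subset[OF A(1)] .
  have avoid: "\<exists>G\<in>\<F>. up_set T G \<subseteq> topspace T - (A \<inter> C)"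
    if C: "closedin T C" "\<not> A \<subseteq> C" for C
  proof -
    have closed: "closedin T (A \<inter> C)" using A(1) C(1) by (rule closedin_Int)
    then have "\<not> closed_transversal T \<F> (A \<inter> C)"
      using min[OF _ Int_lower1] C(2) by blast
    then obtain G where G: "G \<in> \<F>" "G \<subseteq> topspace T - (A \<inter> C)"
      using closed fin unfolding closed_transversal_def by (auto simp: fin_subsets_def)
    then show ?thesis
      using up_set_subset_openin[OF openin_diff[OF openin_topspace closed]] by blast
  qed
  fix C1 C2 assume C: "closedin T C1 \<and> closedin T C2 \<and> A \<subseteq> C1 \<union> C2"
  show "A \<subseteq> C1 \<or> A \<subseteq> C2"
  proof (rule ccontr)
    assume "\<not> (A \<subseteq> C1 \<or> A \<subseteq> C2)"
    then obtain G1 G2 where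
        G1: "G1 \<in> \<F>" "up_set T G1 \<subseteq> topspace T - (A \<inter> C1)" and
        G2: "G2 \<in> \<F>" "up_set T G2 \<subseteq> topspace T - (A \<inter> C2)"
      using avoid C by meson
    have "openin T (topspace T - (A \<inter> Ci))" if "closedin T Ci" for Ci
      using A(1) that by blast
    then obtain G where G: "G \<in> \<F>"
        "up_set T G \<subseteq> (topspace T - (A \<inter> C1)) \<inter> (topspace T - (A \<inter> C2))"
      using irreducible_up_family_directed[OF irr _ G1 _ G2] C by blast
    have "G \<subseteq> topspace T" using G(1) fin by (auto simp: fin_subsets_def)
    then have "G \<subseteq> up_set T G" by (rule subset_up_set)
    then have "G \<inter> A = {}" using G(2) C by blast
    then show False using A(2) G(1) by blast
  qed
qed

lemma way_below_I2_refined_by_family: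
  assumes irr: "irreducible_in (upper_vietoris T) (up_set T ` \<F>)"
    and fin: "\<F> \<subseteq> fin_subsets T"
    and x: "x \<in> topspace T" "(\<Inter>G\<in>\<F>. up_set T G) \<subseteq> up_set T {x}"
    and H: "way_below_I2 T H x" "H \<subseteq> U" "openin T U"
  shows "\<exists>G\<in>\<F>. G \<subseteq> U"
proof (rule ccontr)
  assume "\<not> ?thesis"
  then have "closed_transversal T \<F> (topspace T - U)"
    using fin H(3) unfolding closed_transversal_def by (auto simp: fin_subsets_def)
  then obtain A where min: "minimal_closed_transversal T \<F> A" and "A \<subseteq> topspace T - U"
    using minimal_closed_transversal_exists[OF fin] by blast
  then have A: "closedin T A" "\<And>G. G \<in> \<F> \<Longrightarrow> G \<inter> A \<noteq> {}"
    unfolding minimal_closed_transversal_def closed_transversal_def by blast+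
  have "irreducible_in T A"
    using irreducible_minimal_closed_transversal[OF irr fin min] .
  moreover have "upper_bounds T A \<subseteq> (\<Inter>G\<in>\<F>. up_set T G)"
    using A(2) by (rule upper_bounds_subset_Inter_up_set)
  then have "x \<in> delta_cut T A"
    using x by (auto simp: mem_delta_cut_iff)
  ultimately have "H \<inter> A \<noteq> {}"
    using H(1) closure_of_closedin[OF A(1)] unfolding way_below_I2_def by metis
  then show False using \<open>A \<subseteq> topspace T - U\<close> H(2) by blast
qed

lemma w_set_subset_closure_of:
  assumes irr: "irreducible_in (upper_vietoris T) (up_set T ` \<F>)"
    and fin: "\<F> \<subseteq> fin_subsets T"
    and x: "x \<in> topspace T" "(\<Inter>G\<in>\<F>. up_set T G) \<subseteq> up_set T {x}"
  shows "w_set T x \<subseteq> upper_vietoris T closure_of (up_set T ` \<F>)"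
proof
  fix Q assume "Q \<in> w_set T x"
  then obtain H where H: "Q = up_set T H" "H \<in> fin_subsets T" "way_below_I2 T H x"
    unfolding w_set_def by blast
  have "\<exists>G\<in>\<F>. up_set T G \<in> \<O>" if \<O>: "Q \<in> \<O>" "openin (upper_vietoris T) \<O>" for \<O>
  proof -
    obtain U where U: "openin T U" "Q \<in> box T U" "box T U \<subseteq> \<O>"
      using openin_upper_vietoris_imp_box[OF \<O>(2,1)] .
    have "H \<subseteq> U"
      using H(1,2) U(2) subset_up_set[of H T] by (auto simp: box_def fin_subsets_def)
    then obtain G where "G \<in> \<F>" "G \<subseteq> U"
      using way_below_I2_refined_by_family[OF irr fin x H(3) _ U(1)] by blast
    moreover from this have "up_set T G \<in> box T U"
      using up_set_subset_openin[OF U(1)] up_set_in_PS[of G T] fin by (auto simp: box_def)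
    ultimately show ?thesis using U(3) by blast
  qed
  then show "Q \<in> upper_vietoris T closure_of (up_set T ` \<F>)"
    using H up_set_in_PS by (auto simp: in_closure_of topspace_upper_vietoris)
qed

lemma up_set_singleton_subset_Inter_w_set: "up_set T {x} \<subseteq> \<Inter>(w_set T x)"
proof
  fix y assume y: "y \<in> up_set T {x}"
  then have xy: "spec_le T x y" "x \<in> topspace T" "y \<in> topspace T"
    unfolding up_set_def spec_le_def by auto
  show "y \<in> \<Inter>(w_set T x)"
  proof
    fix Q assume "Q \<in> w_set T x"
    then obtain F where F: "Q = up_set T F" "F \<in> fin_subsets T" "way_below_I2 T F x"
      unfolding w_set_def by blast
    have "irreducible_in T {x}" using xy unfolding irreducible_in_def by blast
    moreover have "x \<in> delta_cut T {x}"
      using xy(2) by (auto simp: mem_delta_cut_iff upper_bounds_def up_set_def)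
    ultimately obtain f where f: "f \<in> F" "f \<in> T closure_of {x}"
      using F(3) unfolding way_below_I2_def by blast
    then have "spec_le T f x" using F(2) xy(2) unfolding spec_le_def fin_subsets_def by blast
    then have "spec_le T f y" using spec_le_trans[OF _ xy(1)] by blast
    then show "y \<in> Q" using F(1) f(1) xy(3) unfolding up_set_def by blast
  qed
qed

definition GSI2_topology :: "'a topology \<Rightarrow> 'a topology" where
  "GSI2_topology T = topology (\<lambda>U. U \<in> GSI2_opens T)"

lemma istopology_GSI2_opens: "istopology (\<lambda>U. U \<in> GSI2_opens T)"
  unfolding istopology_def
proof (intro conjI allI impI)
  fix U V assume "U \<in> GSI2_opens T" "V \<in> GSI2_opens T"
  then show "U \<inter> V \<in> GSI2_opens T"
    unfolding GSI2_opens_def ev_in_def by (auto intro: eventually_conj)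
next
  fix \<K> assume \<K>: "\<forall>K\<in>\<K>. K \<in> GSI2_opens T"
  show "\<Union>\<K> \<in> GSI2_opens T"
    unfolding GSI2_opens_def
  proof (intro CollectI conjI allI impI)
    show "\<Union>\<K> \<subseteq> topspace T" using \<K> unfolding GSI2_opens_def by blast
    fix N x assume "is_net T N" "x \<in> \<Union>\<K>" "GSI2_conv T N x"
    then obtain K where "K \<in> \<K>" "ev_in N K" using \<K> unfolding GSI2_opens_def by blast
    then show "ev_in N (\<Union>\<K>)" unfolding ev_in_def by (auto elim: eventually_mono)
  qed
qed

lemma openin_GSI2_topology: "openin (GSI2_topology T) U \<longleftrightarrow> U \<in> GSI2_opens T"
  by (simp add: GSI2_topology_def istopology_GSI2_opens)

lemma topspace_in_GSI2_opens: "topspace T \<in> GSI2_opens T"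
  unfolding GSI2_opens_def by (auto simp: is_net_def ev_in_def)

lemma topspace_GSI2_topology: "topspace (GSI2_topology T) = topspace T"
proof (rule subset_antisym)
  show "topspace (GSI2_topology T) \<subseteq> topspace T"
    using openin_topspace[of "GSI2_topology T"] unfolding openin_GSI2_topology GSI2_opens_def
    by blast
  show "topspace T \<subseteq> topspace (GSI2_topology T)"
    using topspace_in_GSI2_opens[of T] openin_subset by (metis openin_GSI2_topology)
qed

lemma GSI2_conv_nhdsin:
  assumes "GSI2_topological T" "x \<in> topspace T"
  shows "GSI2_conv T (nhdsin (GSI2_topology T) x) x"
proof -
  let ?N = "nhdsin (GSI2_topology T) x"
  have "is_net T ?N"
    unfolding is_net_def eventually_False[symmetric] eventually_nhdsin
      openin_GSI2_topology topspace_GSI2_topology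
    using assms(2) topspace_in_GSI2_opens by blast
  moreover have "\<forall>U\<in>GSI2_opens T. x \<in> U \<longrightarrow> ev_in ?N U"
    unfolding ev_in_def eventually_nhdsin openin_GSI2_topology by blast
  ultimately show ?thesis
    using assms unfolding GSI2_topological_def by blast
qed

lemma irreducible_in_openin_Int:
  assumes D: "irreducible_in T D"
    and U: "openin T U" "U \<inter> D \<noteq> {}" and V: "openin T V" "V \<inter> D \<noteq> {}"
  shows "U \<inter> V \<inter> D \<noteq> {}"
proof
  assume "U \<inter> V \<inter> D = {}"
  then have "D \<subseteq> (topspace T - U) \<union> (topspace T - V)" using D by (auto simp: irreducible_in_def)
  then have "D \<subseteq> topspace T - U \<or> D \<subseteq> topspace T - V"
    using D U(1) V(1) unfolding irreducible_in_def by blast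
  then show False using U(2) V(2) by blast
qed

text \<open>An irreducible set \<open>D\<close> as a net: its eventuality filter is generated by the traces
  on \<open>D\<close> of the open sets meeting \<open>D\<close>, a filter base by irreducibility.\<close>

definition irreducible_net :: "'a topology \<Rightarrow> 'a set \<Rightarrow> 'a filter" where
  "irreducible_net T D = (INF U\<in>{U. openin T U \<and> U \<inter> D \<noteq> {}}. principal (U \<inter> D))"

lemma eventually_irreducible_net:
  assumes D: "irreducible_in T D"
  shows "eventually P (irreducible_net T D) \<longleftrightarrow>
    (\<exists>U. openin T U \<and> U \<inter> D \<noteq> {} \<and> (\<forall>y\<in>U \<inter> D. P y))"
proof -
  let ?B = "{U. openin T U \<and> U \<inter> D \<noteq> {}}"
  have "topspace T \<in> ?B"
    using D by (auto simp: irreducible_in_def)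
  moreover have "\<exists>W\<in>?B. principal (W \<inter> D) \<le> inf (principal (U \<inter> D)) (principal (V \<inter> D))"
    if "U \<in> ?B" "V \<in> ?B" for U V
    using that irreducible_in_openin_Int[OF D] by (intro bexI[of _ "U \<inter> V"]) auto
  ultimately show ?thesis
    unfolding irreducible_net_def by (subst eventually_INF_base) (auto simp: eventually_principal)
qed

lemma GSI2_conv_irreducible_net:
  assumes D: "irreducible_in T D" and x: "x \<in> delta_cut T D"
  shows "GSI2_conv T (irreducible_net T D) x"
  unfolding GSI2_conv_def
proof (intro exI[of _ "(\<lambda>d. {d}) ` D"] conjI allI impI)
  have D_sub: "D \<subseteq> topspace T" "D \<noteq> {}" using D by (auto simp: irreducible_in_def)
  then show "(\<lambda>d. {d}) ` D \<subseteq> fin_subsets T" by (auto simp: fin_subsets_def)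
  show "irreducible_in (upper_vietoris T) (up_set T ` (\<lambda>d. {d}) ` D)"
    unfolding image_image
    using irreducible_in_continuous_map_image[OF continuous_map_up_set_singleton D] .
  fix U assume U: "openin T U" "\<exists>G\<in>(\<lambda>d. {d}) ` D. up_set T G \<subseteq> U"
  then obtain d where "d \<in> D" "d \<in> U"
    using D_sub(1) up_set_singleton_subset_openin_iff[OF U(1)] by blast
  then show "ev_in (irreducible_net T D) U"
    unfolding ev_in_def eventually_irreducible_net[OF D] using U(1) by blast
next
  have "(\<Inter>G\<in>(\<lambda>d. {d}) ` D. up_set T G) \<subseteq> upper_bounds T D"
    using D by (auto simp: irreducible_in_def up_set_def upper_bounds_def)
  then show "(\<Inter>G\<in>(\<lambda>d. {d}) ` D. up_set T G) \<subseteq> up_set T {x}"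
    using x by (auto simp: mem_delta_cut_iff)
qed

lemma GSI2_open_meets_irreducible:
  assumes D: "irreducible_in T D" and x: "x \<in> delta_cut T D"
    and V: "V \<in> GSI2_opens T" "x \<in> V"
  shows "V \<inter> D \<noteq> {}"
proof -
  have "is_net T (irreducible_net T D)"
    unfolding is_net_def eventually_False[symmetric] eventually_irreducible_net[OF D]
    using D by (auto simp: irreducible_in_def)
  then have "ev_in (irreducible_net T D) V"
    using V GSI2_conv_irreducible_net[OF D x] unfolding GSI2_opens_def by blast
  then show ?thesis
    unfolding ev_in_def eventually_irreducible_net[OF D] by blast
qed

lemma way_below_I2_if_eventually_nhdsin:
  assumes "\<And>U. openin T U \<Longrightarrow> up_set T G \<subseteq> U \<Longrightarrow>
    eventually (\<lambda>y. y \<in> U) (nhdsin (GSI2_topology T) x)"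
  shows "way_below_I2 T G x"
  unfolding way_below_I2_def
proof (intro allI impI notI)
  fix D assume D: "irreducible_in T D" and x: "x \<in> delta_cut T D"
    and disjoint: "G \<inter> T closure_of D = {}"
  let ?U = "topspace T - T closure_of D"
  have "up_set T G \<subseteq> ?U"
    using up_set_disjoint_closedin[OF closedin_closure_of disjoint] up_set_subset_topspace[of T G]
    by blast
  then have "eventually (\<lambda>y. y \<in> ?U) (nhdsin (GSI2_topology T) x)"
    using assms openin_diff[OF openin_topspace closedin_closure_of] by blast
  moreover have "x \<in> topspace T" using x by (simp add: mem_delta_cut_iff)
  ultimately obtain V where V: "V \<in> GSI2_opens T" "x \<in> V" "V \<subseteq> ?U"
    unfolding eventually_nhdsin openin_GSI2_topology topspace_GSI2_topology by blast
  have "D \<subseteq> T closure_of D"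
    using D closure_of_subset by (auto simp: irreducible_in_def)
  then show False
    using GSI2_open_meets_irreducible[OF D x V(1,2)] V(3) by blast
qed

theorem proposition4p7:
  fixes T :: "'a topology"
  assumes "T0_space T"
    and "GSI2_topological T"
  shows "QI2_continuous T"
  unfolding QI2_continuous_def
proof (intro ballI conjI)
  fix x assume x: "x \<in> topspace T"
  obtain \<F> where fin: "\<F> \<subseteq> fin_subsets T"
    and irr: "irreducible_in (upper_vietoris T) (up_set T ` \<F>)"
    and conv: "\<And>U. openin T U \<Longrightarrow> (\<exists>G\<in>\<F>. up_set T G \<subseteq> U) \<Longrightarrow>
        eventually (\<lambda>y. y \<in> U) (nhdsin (GSI2_topology T) x)"
    and Inter: "(\<Inter>G\<in>\<F>. up_set T G) \<subseteq> up_set T {x}"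
    using GSI2_conv_nhdsin[OF assms(2) x] unfolding GSI2_conv_def ev_in_def by blast
  have sub: "up_set T ` \<F> \<subseteq> w_set T x"
  proof
    fix Q assume "Q \<in> up_set T ` \<F>"
    then obtain G where G: "G \<in> \<F>" "Q = up_set T G" by blast
    have "way_below_I2 T G x"
      using conv G(1) by (intro way_below_I2_if_eventually_nhdsin) blast
    then show "Q \<in> w_set T x" using G fin unfolding w_set_def by blast
  qed
  show "irreducible_in (upper_vietoris T) (w_set T x)"
    using irreducible_in_closure_between[OF irr sub w_set_subset_closure_of[OF irr fin x Inter]] .
  have "\<Inter>(w_set T x) \<subseteq> up_set T {x}"
    using Inter_anti_mono[OF sub] Inter by (rule order.trans)
  with up_set_singleton_subset_Inter_w_set show "up_set T {x} = \<Inter>(w_set T x)"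
    by (rule subset_antisym)
qed

end
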